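(* Let $(\bm{W}_0,\bm{D}_0,f_{0,j}:j=1,\ldots,p)$ and $(\bm{W}_1,\bm{D}_0,f_{1,j}:j=1,\ldots,p)$ be two parameter values of the model in the context, sharing the same diagonal matrix $\bm{D}_0$, such that they generate the same distribution of $\bm{Y}_t$. If $\bm{W}_0$ is strictly lower triangular and $\bm{W}_1$ has all diagonal entries zero, then $\bm{W}_0=\bm{W}_1$.
   Context: Model: a $p$-dimensional time series $(\bm{Y}_t)$ satisfies $\bm{Y}_t-\bm{W}\bm{Y}_t=\bm{D}^{1/2}\bm{Z}_t$, where $\bm{W}$ is a $p\times p$ matrix with $\bm{I}-\bm{W}$ invertible, $\bm{D}$ is a diagonal matrix with positive diagonal entries, and $(\bm{Z}_t)$ is a zero-mean stationary Gaussian process whose $p$ components are mutually independent univariate stationary series with unit variance and spectral densities $f_1,\ldots,f_p$. *)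

theory Defs
  imports "HOL-Analysis.Analysis"
begin

text \<open>Matrices are real ^ 'n ^ 'n with a finite, linearly ordered index type 'n
  (the p coordinates, ordered so that "lower triangular" makes sense).\<close>

definition is_diag :: "real^'n^'n \<Rightarrow> bool" where
  "is_diag D \<longleftrightarrow> (\<forall>i j. i \<noteq> j \<longrightarrow> D $ i $ j = 0)"

definition diag_sqrt :: "real^'n^'n \<Rightarrow> real^'n^'n" where
  "diag_sqrt D = (\<chi> i j. if i = j then sqrt (D $ i $ i) else 0)"

definition diag_mat :: "real^'n \<Rightarrow> real^'n^'n" where
  "diag_mat v = (\<chi> i j. if i = j then v $ i else 0)"

text \<open>A spectral density of a real, zero-mean, unit-variance stationary series,
  convention gamma(h) = integral over [-pi,pi] of e^(i h l) f(l) dl.\<close>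
definition unit_spectral_density :: "(real \<Rightarrow> real) \<Rightarrow> bool" where
  "unit_spectral_density f \<longleftrightarrow>
     (\<forall>l. f l \<ge> 0) \<and> (\<forall>l. f (- l) = f l) \<and>
     f integrable_on {-pi..pi} \<and> integral {-pi..pi} f = 1"

definition autocov_of_sd :: "(real \<Rightarrow> real) \<Rightarrow> int \<Rightarrow> real" where
  "autocov_of_sd f h = integral {-pi..pi} (\<lambda>l. cos (real_of_int h * l) * f l)"

text \<open>Valid parameter (W, D, f_1..f_p) of the model Y_t - W Y_t = D^(1/2) Z_t.\<close>
definition valid_param :: "real^'n^'n \<Rightarrow> real^'n^'n \<Rightarrow> ('n \<Rightarrow> real \<Rightarrow> real) \<Rightarrow> bool" where
  "valid_param W D f \<longleftrightarrow>
     invertible (mat 1 - W) \<and> is_diag D \<and> (\<forall>i. D $ i $ i > 0) \<and>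
     (\<forall>j. unit_spectral_density (f j))"

text \<open>Autocovariance Gamma(h) = Cov(Y_{t+h}, Y_t) of
  Y_t = (I - W)^{-1} D^(1/2) Z_t, Z having independent components with
  spectral densities f_j.\<close>
definition model_autocov ::
  "real^'n^'n \<Rightarrow> real^'n^'n \<Rightarrow> ('n \<Rightarrow> real \<Rightarrow> real) \<Rightarrow> int \<Rightarrow> real^'n^'n" where
  "model_autocov W D f h =
     (let A = matrix_inv (mat 1 - W) ** diag_sqrt D
      in A ** diag_mat (\<chi> j. autocov_of_sd (f j) h) ** transpose A)"

text \<open>A zero-mean stationary Gaussian process is determined in distribution by
  its autocovariance function, so two parameters generate the same law of (Y_t)
  iff their autocovariance functions coincide at every lag.\<close>
definition same_distribution ::
  "real^'n^'n \<Rightarrow> real^'n^'n \<Rightarrow> ('n \<Rightarrow> real \<Rightarrow> real) \<Rightarrow>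
   real^'n^'n \<Rightarrow> real^'n^'n \<Rightarrow> ('n \<Rightarrow> real \<Rightarrow> real) \<Rightarrow> bool" where
  "same_distribution W0 D0 f0 W1 D1 f1 \<longleftrightarrow>
     (\<forall>h. model_autocov W0 D0 f0 h = model_autocov W1 D1 f1 h)"

definition strictly_lower_triangular :: "real^('n::{finite,linorder})^('n::{finite,linorder}) \<Rightarrow> bool" where
  "strictly_lower_triangular W \<longleftrightarrow> (\<forall>i j. i \<le> j \<longrightarrow> W $ i $ j = 0)"

end

theory Submission
  imports Defs
begin

text \<open>With \<open>B\<^sub>k = I - W\<^sub>k\<close> it reads
  \<open>B\<^sub>0\<^sup>-\<^sup>1 D B\<^sub>0\<^sup>-\<^sup>T = B\<^sub>1\<^sup>-\<^sup>1 D B\<^sub>1\<^sup>-\<^sup>T\<close>, so \<open>C = B\<^sub>1 B\<^sub>0\<^sup>-\<^sup>1\<close> satisfies \<open>C D C\<^sup>T = D\<close> and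
  \<open>C B\<^sub>0 = B\<^sub>1\<close>. Going through the rows of \<open>C\<close> from the last one upwards:
  if all later rows are unit rows, the off-diagonal entries of \<open>C D C\<^sup>T = D\<close>
  kill the entries of row \<open>j\<close> right of the diagonal; as \<open>B\<^sub>0\<close> is unit lower
  triangular and \<open>B\<^sub>1\<close> has unit diagonal, \<open>C B\<^sub>0 = B\<^sub>1\<close> then forces \<open>C\<^sub>j\<^sub>j = 1\<close>,
  and the diagonal entry \<open>\<Sum>\<^sub>l C\<^sub>j\<^sub>l\<^sup>2 D\<^sub>l\<^sub>l = D\<^sub>j\<^sub>j\<close> leaves no room for
  other nonzero entries. Hence \<open>C = I\<close> and \<open>B\<^sub>0 = B\<^sub>1\<close>.\<close>

lemma
  fixes A :: "real^'n^'n"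
  assumes "invertible A"
  shows matrix_inv_right: "A ** matrix_inv A = mat 1"
    and matrix_inv_left: "matrix_inv A ** A = mat 1"
proof -
  have "\<exists>A'. A ** A' = mat 1 \<and> A' ** A = mat 1"
    using assms by (simp add: invertible_def)
  then have "A ** matrix_inv A = mat 1 \<and> matrix_inv A ** A = mat 1"
    unfolding matrix_inv_def by (rule someI_ex)
  then show "A ** matrix_inv A = mat 1" "matrix_inv A ** A = mat 1"
    by auto
qed

lemma diag_sqrt_mult_transpose:
  fixes D :: "real^'n^'n"
  assumes "is_diag D" and "\<forall>i. D $ i $ i \<ge> 0"
  shows "diag_sqrt D ** transpose (diag_sqrt D) = D"
proof -
  have "(diag_sqrt D ** transpose (diag_sqrt D)) $ i $ j = D $ i $ j" for i j
  proof (cases "i = j")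
    case True
    have "(diag_sqrt D ** transpose (diag_sqrt D)) $ i $ j = sqrt (D $ i $ i) * sqrt (D $ i $ i)"
      using True by (simp add: matrix_matrix_mult_def transpose_def diag_sqrt_def if_distrib
          sum.delta cong: if_cong)
    then show ?thesis
      using True assms(2) by simp
  next
    case False
    then show ?thesis
      using assms(1)
      by (auto simp: matrix_matrix_mult_def transpose_def diag_sqrt_def is_diag_def
          intro!: sum.neutral)
  qed
  then show ?thesis
    by (simp add: vec_eq_iff)
qed

lemma autocov_of_sd_0:
  assumes "unit_spectral_density f"
  shows "autocov_of_sd f 0 = 1"
  using assms by (simp add: autocov_of_sd_def unit_spectral_density_def)

lemma model_autocov_0:
  fixes W D :: "real^'n^'n"
  assumes "is_diag D" and "\<forall>i. D $ i $ i \<ge> 0" and "\<forall>j. unit_spectral_density (f j)"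
  shows "model_autocov W D f 0 = matrix_inv (mat 1 - W) ** D ** transpose (matrix_inv (mat 1 - W))"
proof -
  have "diag_mat (\<chi> j. autocov_of_sd (f j) 0) = (mat 1 :: real^'n^'n)"
    using assms(3) by (simp add: autocov_of_sd_0 diag_mat_def mat_def vec_eq_iff)
  then show ?thesis
    unfolding model_autocov_def Let_def matrix_transpose_mul
    by (metis matrix_mul_rid matrix_mul_assoc diag_sqrt_mult_transpose[OF assms(1,2)])
qed

lemma quotient_fixes_congruence:
  fixes B0 B1 D :: "real^'n^'n"
  assumes "invertible B1"
    and "matrix_inv B0 ** D ** transpose (matrix_inv B0)
       = matrix_inv B1 ** D ** transpose (matrix_inv B1)"
  shows "(B1 ** matrix_inv B0) ** D ** transpose (B1 ** matrix_inv B0) = D"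
proof -
  have "(B1 ** matrix_inv B0) ** D ** transpose (B1 ** matrix_inv B0)
      = B1 ** (matrix_inv B0 ** D ** transpose (matrix_inv B0)) ** transpose B1"
    by (simp add: matrix_transpose_mul matrix_mul_assoc)
  also have "\<dots> = (B1 ** matrix_inv B1) ** D ** transpose (B1 ** matrix_inv B1)"
    by (simp add: assms(2) matrix_transpose_mul matrix_mul_assoc)
  also have "\<dots> = D"
    by (simp add: matrix_inv_right[OF assms(1)] transpose_mat)
  finally show ?thesis .
qed

lemma diag_congruence_entry:
  fixes C D :: "real^'n^'n"
  assumes "is_diag D"
  shows "(C ** D ** transpose C) $ i $ j = (\<Sum>l\<in>UNIV. C $ i $ l * D $ l $ l * C $ j $ l)"
proof -
  have "(C ** D) $ i $ l = (\<Sum>k\<in>UNIV. if k = l then C $ i $ k * D $ k $ l else 0)" for l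
    unfolding matrix_matrix_mult_def vec_lambda_beta
    using assms by (intro sum.cong) (auto simp: is_diag_def)
  then have "(C ** D) $ i $ l = C $ i $ l * D $ l $ l" for l
    by simp
  then show ?thesis
    by (simp add: matrix_matrix_mult_def transpose_def)
qed

lemma finite_linorder_downward_induct:
  fixes j :: "'a::{finite,linorder}"
  assumes "\<And>j. (\<And>k. j < k \<Longrightarrow> P k) \<Longrightarrow> P j"
  shows "P j"
proof (induction "card {k. j < k}" arbitrary: j rule: less_induct)
  case less
  show ?case
  proof (rule assms)
    fix k
    assume "j < k"
    then have "{k'. k < k'} \<subset> {k'. j < k'}"
      by auto
    then show "P k"
      by (intro less psubset_card_mono) simp_all
  qed
qed

context
  fixes C D :: "real^'n^'n"
  assumes D_diag: "is_diag D" and D_pos: "\<forall>i. D $ i $ i > 0"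
    and CDC: "C ** D ** transpose C = D"
begin

lemma unit_row_imp_column_zero:
  assumes "C $ k = axis k 1" and "j \<noteq> k"
  shows "C $ j $ k = 0"
proof -
  have "(C ** D ** transpose C) $ k $ j
      = (\<Sum>l\<in>UNIV. if l = k then C $ j $ k * D $ k $ k else 0)"
    unfolding diag_congruence_entry[OF D_diag]
    by (intro sum.cong) (auto simp: assms(1) axis_def)
  moreover have "D $ k $ j = 0"
    using D_diag assms(2) by (simp add: is_diag_def)
  ultimately show ?thesis
    using CDC D_pos[rule_format, of k] by simp
qed

lemma unit_diag_imp_unit_row:
  assumes "C $ j $ j = 1"
  shows "C $ j = axis j 1"
proof -
  let ?t = "\<lambda>l. (C $ j $ l)\<^sup>2 * D $ l $ l"
  have "?t j + (\<Sum>l\<in>UNIV - {j}. ?t l) = (\<Sum>l\<in>UNIV. ?t l)"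
    by (simp add: sum.remove)
  also have "\<dots> = (C ** D ** transpose C) $ j $ j"
    by (simp add: diag_congruence_entry[OF D_diag] power2_eq_square mult_ac)
  also have "\<dots> = ?t j"
    using CDC assms by simp
  finally have "(\<Sum>l\<in>UNIV - {j}. ?t l) = 0"
    by simp
  then have "\<forall>l\<in>UNIV - {j}. ?t l = 0"
    using D_pos by (subst (asm) sum_nonneg_eq_0_iff) (auto simp: less_imp_le)
  then have "C $ j $ l = 0" if "l \<noteq> j" for l
    using that D_pos[rule_format, of l] by auto
  then show ?thesis
    using assms by (auto simp: vec_eq_iff axis_def)
qed

end

lemma congruence_unit_triangular_eq_id:
  fixes B C D :: "real^('n::{finite,linorder})^('n::{finite,linorder})"
  assumes D_diag: "is_diag D" and D_pos: "\<forall>i. D $ i $ i > 0"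
    and CDC: "C ** D ** transpose C = D"
    and B_unit_lower: "\<forall>l j. l \<le> j \<longrightarrow> B $ l $ j = mat 1 $ l $ j"
    and CB_diag: "\<forall>j. (C ** B) $ j $ j = 1"
  shows "C = mat 1"
proof -
  have "C $ j = axis j 1" for j
  proof (induction j rule: finite_linorder_downward_induct)
    case (1 j)
    then have right_zero: "C $ j $ l = 0" if "j < l" for l
      using that by (intro unit_row_imp_column_zero[OF D_diag D_pos CDC]) auto
    have "(C ** B) $ j $ j = (\<Sum>l\<in>UNIV. if l = j then C $ j $ l else 0)"
      unfolding matrix_matrix_mult_def vec_lambda_beta
    proof (rule sum.cong)
      fix l
      show "C $ j $ l * B $ l $ j = (if l = j then C $ j $ l else 0)"
        using B_unit_lower right_zero[of l] by (cases "l \<le> j") (auto simp: mat_def)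
    qed simp
    then have "C $ j $ j = 1"
      using CB_diag by simp
    then show ?case
      by (rule unit_diag_imp_unit_row[OF D_diag D_pos CDC])
  qed
  then show ?thesis
    by (simp add: vec_eq_iff mat_def axis_def)
qed

theorem lemma1:
  fixes W0 W1 D0 :: "real^('n::{finite,linorder})^('n::{finite,linorder})"
    and f0 f1 :: "'n \<Rightarrow> real \<Rightarrow> real"
  assumes "valid_param W0 D0 f0"
    and "valid_param W1 D0 f1"
    and "same_distribution W0 D0 f0 W1 D0 f1"
    and "strictly_lower_triangular W0"
    and "\<forall>i. W1 $ i $ i = 0"
  shows "W0 = W1"
proof -
  define B0 where "B0 = mat 1 - W0"
  define B1 where "B1 = mat 1 - W1"
  define C where "C = B1 ** matrix_inv B0"
  have inv: "invertible B0" "invertible B1" and D0_diag: "is_diag D0"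
    and D0_pos: "\<forall>i. D0 $ i $ i > 0"
    using assms(1,2) by (auto simp: valid_param_def B0_def B1_def)
  have "model_autocov W0 D0 f0 0 = model_autocov W1 D0 f1 0"
    using assms(3) by (simp add: same_distribution_def)
  then have "C ** D0 ** transpose C = D0"
    using assms(1,2) unfolding C_def
    by (intro quotient_fixes_congruence[OF inv(2)])
      (simp add: valid_param_def model_autocov_0 less_imp_le B0_def B1_def)
  moreover have "\<forall>l j. l \<le> j \<longrightarrow> B0 $ l $ j = mat 1 $ l $ j"
    using assms(4) by (simp add: B0_def strictly_lower_triangular_def)
  moreover have CB0: "C ** B0 = B1"
    by (simp add: C_def matrix_mul_assoc[symmetric] matrix_inv_left[OF inv(1)])
  then have "\<forall>j. (C ** B0) $ j $ j = 1"
    using assms(5) by (simp add: B1_def mat_def)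
  ultimately have "C = mat 1"
    using congruence_unit_triangular_eq_id D0_diag D0_pos by blast
  then show ?thesis
    using CB0 by (simp add: B0_def B1_def)
qed

end
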